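(* Every weakly norming graph is edge-transitive. That is, if $G$ is a finite simple graph such that $h \mapsto t_G(|h|)^{1/|E(G)|}$ is a norm on $\mathcal{H}$, then for any two edges $e, e'$ of $G$ there is an automorphism of $G$ mapping $e$ to $e'$.
   Context: Let $\mathcal{H}$ be the class of bounded measurable symmetric functions $h:[0,1]^2\to\mathbb{R}$ (with $h(x,y)=h(y,x)$), functions equal almost everywhere being identified. For a finite simple graph $G$ with vertex set $\{v_1,\ldots,v_n\}$ and nonempty edge set $E(G)$, and $h\in\mathcal{H}$, define the homomorphism density $$t_G(h)=\int_{[0,1]^n}\prod_{\{v_i,v_j\}\in E(G)} h(x_i,x_j)\,dx_1\cdots dx_n.$$ A graph $G$ is called weakly norming if $h\mapsto t_G(|h|)^{1/|E(G)|}$ is a norm on $\mathcal{H}$. *)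

theory Defs
  imports "HOL-Analysis.Analysis"
begin

definition simple_graph :: "nat \<Rightarrow> nat set set \<Rightarrow> bool" where
  "simple_graph n E \<longleftrightarrow> (\<forall>e\<in>E. e \<subseteq> {..<n} \<and> card e = 2)"

definition unit_interval :: "real measure" where
  "unit_interval = restrict_space lborel {0..1}"

definition kernel_class :: "(real \<Rightarrow> real \<Rightarrow> real) set" where
  "kernel_class = {h. (\<lambda>p. h (fst p) (snd p)) \<in> borel_measurable borel
                      \<and> (\<exists>B. \<forall>x y. \<bar>h x y\<bar> \<le> B)
                      \<and> (\<forall>x y. h x y = h y x)}"

text \<open>Homomorphism density t_G(h). Each edge e = {i,j} contributes h(x_i,x_j);
  since h is symmetric the order (Min e, Max e) is immaterial.\<close>
definition hom_density :: "nat \<Rightarrow> nat set set \<Rightarrow> (real \<Rightarrow> real \<Rightarrow> real) \<Rightarrow> real" where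
  "hom_density n E h =
     integral\<^sup>L (PiM {..<n} (\<lambda>_. unit_interval)) (\<lambda>x. \<Prod>e\<in>E. h (x (Min e)) (x (Max e)))"

definition graph_norm :: "nat \<Rightarrow> nat set set \<Rightarrow> (real \<Rightarrow> real \<Rightarrow> real) \<Rightarrow> real" where
  "graph_norm n E h = hom_density n E (\<lambda>x y. \<bar>h x y\<bar>) powr (1 / real (card E))"

text \<open>h \<mapsto> t_G(|h|)^(1/|E|) is a norm on H (functions equal a.e. identified):
  definiteness modulo a.e.-equality, absolute homogeneity, triangle inequality
  (nonnegativity and well-definedness on a.e.-classes are automatic).\<close>
definition weakly_norming :: "nat \<Rightarrow> nat set set \<Rightarrow> bool" where
  "weakly_norming n E \<longleftrightarrow>
     (\<forall>h\<in>kernel_class. graph_norm n E h = 0 \<longleftrightarrow>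
         (AE p in unit_interval \<Otimes>\<^sub>M unit_interval. h (fst p) (snd p) = 0)) \<and>
     (\<forall>h\<in>kernel_class. \<forall>c::real. graph_norm n E (\<lambda>x y. c * h x y) = \<bar>c\<bar> * graph_norm n E h) \<and>
     (\<forall>h\<in>kernel_class. \<forall>g\<in>kernel_class.
         graph_norm n E (\<lambda>x y. h x y + g x y) \<le> graph_norm n E h + graph_norm n E g)"

definition graph_automorphism :: "nat \<Rightarrow> nat set set \<Rightarrow> (nat \<Rightarrow> nat) \<Rightarrow> bool" where
  "graph_automorphism n E \<sigma> \<longleftrightarrow> bij_betw \<sigma> {..<n} {..<n} \<and>
     (\<forall>e. e \<subseteq> {..<n} \<longrightarrow> (e \<in> E \<longleftrightarrow> \<sigma> ` e \<in> E))"

definition edge_transitive :: "nat \<Rightarrow> nat set set \<Rightarrow> bool" where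
  "edge_transitive n E \<longleftrightarrow>
     (\<forall>e\<in>E. \<forall>e'\<in>E. \<exists>\<sigma>. graph_automorphism n E \<sigma> \<and> \<sigma> ` e = e')"

end

theory Submission
  imports Defs
begin

(* A weakly norming graph satisfies the triangle inequality for step kernels, i.e. for the norms
   hom_sum(|M|)^(1/|E|) of symmetric matrices M.  Splitting a blown-up matrix into pieces supported
   on single edges turns this into the generalised Hoelder inequality
   hom_sum(A) \<le> \<Prod>e\<in>E. hom_sum(A e)^(1/|E|), first up to a constant and then exactly by the
   tensor power trick.  It is an equality when all A e equal B, so the first variation in direction
   \<Phi> at a single edge e, the sum over vertex maps \<phi> of \<Phi>(\<phi> e) times the product of B(\<phi> f) over
   the other edges f, does not depend on e.  For B the indicator of a set S of pairs and \<Phi> that of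
   a pair e', it counts the maps sending e onto e' and all other edges into S; by inclusion-exclusion
   the number of maps sending the other edges exactly onto S is independent of e as well.  For
   S = E - {e'} the identity is such a map for the edge e', so every edge e has one, and a vertex map
   permuting the edges yields an automorphism. *)

section \<open>Weighted homomorphism sums\<close>

definition vertex_maps :: "nat \<Rightarrow> nat \<Rightarrow> (nat \<Rightarrow> nat) set" where
  "vertex_maps n k = {..<n} \<rightarrow>\<^sub>E {..<k}"

(* With the same matrix M on every edge this is k^n t_G(step kernel of M); edge-dependent weights
   A e are what the Hoelder argument needs. *)
definition hom_sum :: "nat \<Rightarrow> nat set set \<Rightarrow> nat \<Rightarrow> (nat set \<Rightarrow> nat \<Rightarrow> nat \<Rightarrow> real) \<Rightarrow> real" where
  "hom_sum n E k A = (\<Sum>\<phi>\<in>vertex_maps n k. \<Prod>e\<in>E. A e (\<phi> (Min e)) (\<phi> (Max e)))"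

definition matrix_norm :: "nat \<Rightarrow> nat set set \<Rightarrow> nat \<Rightarrow> (nat \<Rightarrow> nat \<Rightarrow> real) \<Rightarrow> real" where
  "matrix_norm n E k M = hom_sum n E k (\<lambda>_ a b. \<bar>M a b\<bar>) powr (1 / real (card E))"

definition sym_matrix :: "nat \<Rightarrow> (nat \<Rightarrow> nat \<Rightarrow> real) \<Rightarrow> bool" where
  "sym_matrix k M \<longleftrightarrow> (\<forall>a<k. \<forall>b<k. M a b = M b a)"

definition pos_matrix :: "nat \<Rightarrow> (nat \<Rightarrow> nat \<Rightarrow> real) \<Rightarrow> bool" where
  "pos_matrix k M \<longleftrightarrow> (\<forall>a<k. \<forall>b<k. 0 < M a b)"

lemma powr_one_over_power:
  fixes x :: real assumes "x \<ge> 0" "N > 0"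
  shows "(x powr (1 / real N)) ^ N = x"
  using assms by (cases "x = 0") (simp_all add: powr_realpow[symmetric] powr_powr)

lemma finite_vertex_maps [simp]: "finite (vertex_maps n k)"
  by (simp add: vertex_maps_def finite_PiE)

lemma card_vertex_maps: "card (vertex_maps n k) = k ^ n"
  by (simp add: vertex_maps_def card_PiE)

lemma vertex_maps_less: "\<phi> \<in> vertex_maps n k \<Longrightarrow> i < n \<Longrightarrow> \<phi> i < k"
  and vertex_maps_undefined: "\<phi> \<in> vertex_maps n k \<Longrightarrow> \<not> i < n \<Longrightarrow> \<phi> i = undefined"
  by (auto simp: vertex_maps_def PiE_iff extensional_def)

lemma restrict_in_vertex_maps: "(\<And>i. i < n \<Longrightarrow> f i < k) \<Longrightarrow> restrict f {..<n} \<in> vertex_maps n k"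
  by (auto simp: vertex_maps_def PiE_iff)

lemma vertex_maps_nonempty: "k > 0 \<Longrightarrow> vertex_maps n k \<noteq> {}"
  using restrict_in_vertex_maps[of n "\<lambda>_. 0" k] by auto

lemma bij_betw_vertex_maps_digits:
  assumes "k' > 0"
  shows "bij_betw (\<lambda>(\<psi>, \<alpha>). restrict (\<lambda>i. \<psi> i * k' + \<alpha> i) {..<n})
           (vertex_maps n k \<times> vertex_maps n k') (vertex_maps n (k * k'))"
proof (rule bij_betw_byWitness[where
      f' = "\<lambda>\<phi>. (restrict (\<lambda>i. \<phi> i div k') {..<n}, restrict (\<lambda>i. \<phi> i mod k') {..<n})"])
  have digits_less: "a * k' + b < k * k'" if "a < k" "b < k'" for a b :: nat
  proof -
    have "a * k' + b < Suc a * k'" using that by simp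
    also have "\<dots> \<le> k * k'" using that by (intro mult_le_mono1) simp
    finally show ?thesis .
  qed
  show "(\<lambda>(\<psi>, \<alpha>). restrict (\<lambda>i. \<psi> i * k' + \<alpha> i) {..<n}) ` (vertex_maps n k \<times> vertex_maps n k')
      \<subseteq> vertex_maps n (k * k')"
    using digits_less vertex_maps_less by (auto intro!: restrict_in_vertex_maps)
  show "(\<lambda>\<phi>. (restrict (\<lambda>i. \<phi> i div k') {..<n}, restrict (\<lambda>i. \<phi> i mod k') {..<n})) ` vertex_maps n (k * k')
      \<subseteq> vertex_maps n k \<times> vertex_maps n k'"
    using assms vertex_maps_less
    by (auto intro!: restrict_in_vertex_maps simp: less_mult_imp_div_less)
qed (use assms in \<open>auto simp: fun_eq_iff vertex_maps_def PiE_iff extensional_def\<close>)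

lemma hom_sum_digits:
  assumes "k' > 0" and E: "\<forall>e\<in>E. Min e < n \<and> Max e < n"
  shows "hom_sum n E (k * k') A =
    (\<Sum>(\<psi>, \<alpha>)\<in>vertex_maps n k \<times> vertex_maps n k'.
       \<Prod>e\<in>E. A e (\<psi> (Min e) * k' + \<alpha> (Min e)) (\<psi> (Max e) * k' + \<alpha> (Max e)))"
  unfolding hom_sum_def
  by (subst sum.reindex_bij_betw[OF bij_betw_vertex_maps_digits[OF assms(1)], symmetric])
     (auto intro!: sum.cong prod.cong simp: E)

definition kron :: "nat \<Rightarrow> (nat \<Rightarrow> nat \<Rightarrow> real) \<Rightarrow> (nat \<Rightarrow> nat \<Rightarrow> real) \<Rightarrow> nat \<Rightarrow> nat \<Rightarrow> real" where
  "kron k' M M' p q = M (p div k') (q div k') * M' (p mod k') (q mod k')"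

lemma hom_sum_kron:
  assumes "k' > 0" and E: "\<forall>e\<in>E. Min e < n \<and> Max e < n"
  shows "hom_sum n E (k * k') (\<lambda>e. kron k' (A e) (A' e)) = hom_sum n E k A * hom_sum n E k' A'"
proof -
  have kron_digits: "kron k' (A e) (A' e) (\<psi> (Min e) * k' + \<alpha> (Min e)) (\<psi> (Max e) * k' + \<alpha> (Max e))
      = A e (\<psi> (Min e)) (\<psi> (Max e)) * A' e (\<alpha> (Min e)) (\<alpha> (Max e))"
    if "\<alpha> \<in> vertex_maps n k'" "e \<in> E" for \<psi> \<alpha> e
    using vertex_maps_less[OF that(1)] E that(2) assms(1) by (simp add: kron_def)
  have "hom_sum n E (k * k') (\<lambda>e. kron k' (A e) (A' e)) =
      (\<Sum>(\<psi>, \<alpha>)\<in>vertex_maps n k \<times> vertex_maps n k'.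
         (\<Prod>e\<in>E. A e (\<psi> (Min e)) (\<psi> (Max e))) * (\<Prod>e\<in>E. A' e (\<alpha> (Min e)) (\<alpha> (Max e))))"
    unfolding hom_sum_digits[OF assms] prod.distrib[symmetric]
    by (auto intro!: sum.cong prod.cong simp: kron_digits)
  then show ?thesis
    by (simp add: hom_sum_def sum_product sum.cartesian_product)
qed

lemma kron_sym_matrix: "sym_matrix k M \<Longrightarrow> k > 0 \<Longrightarrow> sym_matrix (k * k) (kron k M M)"
  unfolding sym_matrix_def kron_def by (simp add: less_mult_imp_div_less)

lemma kron_pos_matrix: "pos_matrix k M \<Longrightarrow> k > 0 \<Longrightarrow> pos_matrix (k * k) (kron k M M)"
  unfolding pos_matrix_def kron_def by (simp add: less_mult_imp_div_less)

(* The k n points are pairs (vertex of G, point of [k]) encoded as a k + b; only pairs lying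
   over the edge e carry the weight M. *)
definition edge_blowup :: "nat \<Rightarrow> (nat \<Rightarrow> nat \<Rightarrow> real) \<Rightarrow> nat set \<Rightarrow> nat \<Rightarrow> nat \<Rightarrow> real" where
  "edge_blowup k M e p q = (if {p div k, q div k} = e then M (p mod k) (q mod k) else 0)"

lemma edge_blowup_digits:
  "b < k \<Longrightarrow> b' < k \<Longrightarrow> edge_blowup k M e (a * k + b) (a' * k + b') = (if {a, a'} = e then M b b' else 0)"
  by (simp add: edge_blowup_def)

lemma edge_blowup_sym_matrix: "sym_matrix k M \<Longrightarrow> k > 0 \<Longrightarrow> sym_matrix K (\<lambda>p q. c * edge_blowup k M e p q)"
  unfolding sym_matrix_def edge_blowup_def by (auto simp: insert_commute)

(* the derivative at \<epsilon> = 0 of hom_sum when edge e is weighted by B + \<epsilon> \<Phi> and all others by B *)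
definition marked_hom_sum ::
    "nat \<Rightarrow> nat set set \<Rightarrow> nat \<Rightarrow> (nat \<Rightarrow> nat \<Rightarrow> real) \<Rightarrow> (nat \<Rightarrow> nat \<Rightarrow> real) \<Rightarrow> nat set \<Rightarrow> real" where
  "marked_hom_sum n E k B \<Phi> e = hom_sum n E k (\<lambda>f. if f = e then \<Phi> else B)"

lemma pos_matrix_perturb:
  assumes "k > 0" "pos_matrix k B"
  obtains \<delta> :: real where "\<delta> > 0" "\<And>\<epsilon>. \<bar>\<epsilon>\<bar> < \<delta> \<Longrightarrow> pos_matrix k (\<lambda>a b. B a b + \<epsilon> * \<Phi> a b)"
proof -
  define I where "I = {..<k} \<times> {..<k}"
  have I: "finite I" "I \<noteq> {}" using assms(1) by (auto simp: I_def)
  define \<beta> where "\<beta> = Min ((\<lambda>(a, b). B a b) ` I)"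
  define \<gamma> where "\<gamma> = Max ((\<lambda>(a, b). \<bar>\<Phi> a b\<bar>) ` I) + 1"
  have "\<beta> > 0" unfolding \<beta>_def using I assms(2) by (auto simp: pos_matrix_def I_def)
  have \<beta>: "\<beta> \<le> B a b" and \<gamma>: "\<bar>\<Phi> a b\<bar> < \<gamma>" if "a < k" "b < k" for a b
  proof -
    have "(a, b) \<in> I" using that by (simp add: I_def)
    then have "\<beta> \<le> B a b" "\<bar>\<Phi> a b\<bar> \<le> \<gamma> - 1"
      unfolding \<beta>_def \<gamma>_def using I(1) by (auto intro!: Min_le Max_ge rev_image_eqI)
    then show "\<beta> \<le> B a b" "\<bar>\<Phi> a b\<bar> < \<gamma>" by simp_all
  qed
  have "\<gamma> > 0" using \<gamma>[of 0 0] assms(1) by simp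
  show thesis
  proof
    show "\<beta> / \<gamma> > 0" using \<open>\<beta> > 0\<close> \<open>\<gamma> > 0\<close> by simp
    fix \<epsilon> :: real assume "\<bar>\<epsilon>\<bar> < \<beta> / \<gamma>"
    then have "\<bar>\<epsilon>\<bar> * \<gamma> < \<beta>" using \<open>\<gamma> > 0\<close> by (simp add: less_divide_eq)
    moreover have "\<bar>\<epsilon> * \<Phi> a b\<bar> \<le> \<bar>\<epsilon>\<bar> * \<gamma>" if "a < k" "b < k" for a b
      using \<gamma>[OF that] by (simp add: abs_mult mult_left_mono)
    ultimately show "pos_matrix k (\<lambda>a b. B a b + \<epsilon> * \<Phi> a b)"
      unfolding pos_matrix_def using \<beta> by (smt (verit) abs_le_D2)
  qed
qed

lemma prod_if_one_zero: "finite A \<Longrightarrow> (\<Prod>x\<in>A. if P x then 1 else 0 :: real) = (if \<forall>x\<in>A. P x then 1 else 0)"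
  by (induction A rule: finite_induct) auto

definition pair_indicator :: "nat set set \<Rightarrow> nat \<Rightarrow> nat \<Rightarrow> real" where
  "pair_indicator S a b = (if {a, b} \<in> S then 1 else 0)"

lemma sym_matrix_pair_indicator: "sym_matrix k (pair_indicator S)"
  by (simp add: sym_matrix_def pair_indicator_def insert_commute)

definition edge_images :: "nat set set \<Rightarrow> nat set \<Rightarrow> (nat \<Rightarrow> nat) \<Rightarrow> nat set set" where
  "edge_images E e \<phi> = (\<lambda>f. \<phi> ` f) ` (E - {e})"

section \<open>Step kernels\<close>

definition cell :: "nat \<Rightarrow> real \<Rightarrow> nat" where
  "cell k x = min (k - 1) (nat \<lfloor>real k * x\<rfloor>)"

definition step_kernel :: "nat \<Rightarrow> (nat \<Rightarrow> nat \<Rightarrow> real) \<Rightarrow> real \<Rightarrow> real \<Rightarrow> real" where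
  "step_kernel k M x y = M (cell k x) (cell k y)"

(* the last cell is closed, so that the cells partition [0,1] *)
definition cell_interval :: "nat \<Rightarrow> nat \<Rightarrow> real set" where
  "cell_interval k a =
     (if a + 1 < k then {real a / real k ..< (real a + 1) / real k} else {real a / real k .. 1})"

lemma cell_less: "k > 0 \<Longrightarrow> cell k x < k"
  by (simp add: cell_def)

lemma measurable_cell [measurable]: "cell k \<in> borel \<rightarrow>\<^sub>M count_space UNIV"
  unfolding cell_def by measurable

lemma step_kernel_in_kernel_class:
  assumes k: "k > 0" and sym: "sym_matrix k M"
  shows "step_kernel k M \<in> kernel_class"
  unfolding kernel_class_def
proof (intro CollectI conjI)
  show "(\<lambda>p. step_kernel k M (fst p) (snd p)) \<in> borel_measurable borel"
    unfolding step_kernel_def borel_prod[symmetric]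
    by (rule measurable_compose_countable[where f = "\<lambda>i p. M i (cell k (snd p))"],
        rule measurable_compose_countable[where f = "\<lambda>j p. M _ j"]) measurable
  have "\<bar>M a b\<bar> \<le> (\<Sum>a<k. \<Sum>b<k. \<bar>M a b\<bar>)" if "a < k" "b < k" for a b
  proof -
    have "\<bar>M a b\<bar> \<le> (\<Sum>b<k. \<bar>M a b\<bar>)" using that by (intro member_le_sum) auto
    also have "\<dots> \<le> (\<Sum>a<k. \<Sum>b<k. \<bar>M a b\<bar>)"
      using that by (intro member_le_sum[where f = "\<lambda>a. \<Sum>b<k. \<bar>M a b\<bar>"]) (auto intro: sum_nonneg)
    finally show ?thesis .
  qed
  then show "\<exists>B. \<forall>x y. \<bar>step_kernel k M x y\<bar> \<le> B"
    using cell_less[OF k] by (auto simp: step_kernel_def)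
  show "\<forall>x y. step_kernel k M x y = step_kernel k M y x"
    using sym cell_less[OF k] by (simp add: step_kernel_def sym_matrix_def)
qed

lemma cell_preimage:
  assumes k: "k > 0" and a: "a < k"
  shows "{x \<in> {0..1}. cell k x = a} = cell_interval k a"
proof -
  have in_cell: "cell k x = a \<longleftrightarrow> x \<in> cell_interval k a" if x: "0 \<le> x" "x \<le> 1" for x
  proof -
    have kx: "0 \<le> real k * x" "real k * x \<le> real k" using x k by (simp_all add: mult_left_le)
    have lower: "real a / real k \<le> x \<longleftrightarrow> real a \<le> real k * x"
      using k by (simp add: divide_le_eq mult.commute)
    have upper: "x < (real a + 1) / real k \<longleftrightarrow> real k * x < real a + 1"
      using k by (simp add: less_divide_eq mult.commute)
    show ?thesis
    proof (cases "a + 1 < k")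
      case True
      then have "cell k x = a \<longleftrightarrow> nat \<lfloor>real k * x\<rfloor> = a"
        by (auto simp: cell_def min_def)
      also have "\<dots> \<longleftrightarrow> real a \<le> real k * x \<and> real k * x < real a + 1"
        using kx by (auto simp: nat_eq_iff floor_eq_iff)
      finally show ?thesis using True lower upper by (simp add: cell_interval_def)
    next
      case False
      then have "a = k - 1" using a by simp
      then have "cell k x = a \<longleftrightarrow> k - 1 \<le> nat \<lfloor>real k * x\<rfloor>"
        by (auto simp: cell_def min_def)
      also have "\<dots> \<longleftrightarrow> real a \<le> real k * x"
        using kx \<open>a = k - 1\<close> by (simp add: le_nat_iff le_floor_iff)
      finally have "cell k x = a \<longleftrightarrow> real a \<le> real k * x" .
      then show ?thesis using False lower x by (simp add: cell_interval_def)
    qed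
  qed
  have "cell_interval k a \<subseteq> {0..1}"
  proof -
    have "0 \<le> real a / real k" "(real a + 1) / real k \<le> 1" using a k by (simp_all add: divide_le_eq)
    moreover have "real a / real k \<le> x" "x \<le> 1 \<or> x < (real a + 1) / real k"
      if "x \<in> cell_interval k a" for x
      using that by (auto simp: cell_interval_def split: if_splits)
    ultimately show ?thesis by (smt (verit) atLeastAtMost_iff subsetI)
  qed
  then show ?thesis using in_cell by auto
qed

lemma
  assumes k: "k > 0" and a: "a < k"
  shows emeasure_cell_preimage: "emeasure unit_interval {x \<in> {0..1}. cell k x = a} = ennreal (1 / real k)"
    and cell_preimage_in_sets: "{x \<in> {0..1}. cell k x = a} \<in> sets unit_interval"
proof -
  have sub: "cell_interval k a \<subseteq> {0..1}" using cell_preimage[OF k a] by auto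
  have "emeasure unit_interval (cell_interval k a) = emeasure lborel (cell_interval k a)"
    unfolding unit_interval_def by (rule emeasure_restrict_space) (use sub in auto)
  also have "\<dots> = ennreal (1 / real k)"
  proof (cases "a + 1 < k")
    case True
    have "real a / real k \<le> (real a + 1) / real k" using k by (simp add: divide_right_mono)
    then show ?thesis using True k by (simp add: cell_interval_def diff_divide_distrib[symmetric])
  next
    case False
    then have "real a = real k - 1" using a by linarith
    then have "1 - real a / real k = 1 / real k" and "real a / real k \<le> 1"
      using k by (simp_all add: field_simps)
    then show ?thesis using False by (simp add: cell_interval_def)
  qed
  finally show "emeasure unit_interval {x \<in> {0..1}. cell k x = a} = ennreal (1 / real k)"
    using cell_preimage[OF k a] by simp
  show "{x \<in> {0..1}. cell k x = a} \<in> sets unit_interval"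
    unfolding cell_preimage[OF k a] unit_interval_def
    using sub by (simp add: sets_restrict_space_iff cell_interval_def)
qed

definition cell_box :: "nat \<Rightarrow> nat \<Rightarrow> (nat \<Rightarrow> nat) \<Rightarrow> (nat \<Rightarrow> real) set" where
  "cell_box n k \<phi> = PiE {..<n} (\<lambda>i. {x \<in> {0..1}. cell k x = \<phi> i})"

lemma
  assumes k: "k > 0" and \<phi>: "\<phi> \<in> vertex_maps n k"
  shows cell_box_in_sets: "cell_box n k \<phi> \<in> sets (PiM {..<n} (\<lambda>_. unit_interval))"
    and emeasure_cell_box: "emeasure (PiM {..<n} (\<lambda>_. unit_interval)) (cell_box n k \<phi>) = ennreal ((1 / real k) ^ n)"
proof -
  have "{0..1::real} \<in> sets lborel" by (simp add: borel_closed)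
  from sigma_finite_measure_restrict_space[OF sigma_finite_lborel this]
  interpret product_sigma_finite "\<lambda>_::nat. unit_interval"
    by (simp add: product_sigma_finite_def unit_interval_def)
  show "cell_box n k \<phi> \<in> sets (PiM {..<n} (\<lambda>_. unit_interval))"
    unfolding cell_box_def
    by (rule sets_PiM_I_finite) (use cell_preimage_in_sets[OF k vertex_maps_less[OF \<phi>]] in auto)
  have "emeasure (PiM {..<n} (\<lambda>_. unit_interval)) (cell_box n k \<phi>) =
      (\<Prod>i<n. emeasure unit_interval {x \<in> {0..1}. cell k x = \<phi> i})"
    unfolding cell_box_def
    by (rule emeasure_PiM) (use cell_preimage_in_sets[OF k vertex_maps_less[OF \<phi>]] in auto)
  also have "\<dots> = (\<Prod>i<n. ennreal (1 / real k))"
    by (intro prod.cong refl emeasure_cell_preimage[OF k] vertex_maps_less[OF \<phi>]) simp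
  finally show "emeasure (PiM {..<n} (\<lambda>_. unit_interval)) (cell_box n k \<phi>) = ennreal ((1 / real k) ^ n)"
    by (simp add: ennreal_power)
qed

lemma indicator_cell_box:
  assumes "\<phi> \<in> vertex_maps n k" "x \<in> space (PiM {..<n} (\<lambda>_. unit_interval))"
  shows "indicator (cell_box n k \<phi>) x = (if \<phi> = restrict (\<lambda>i. cell k (x i)) {..<n} then 1 else 0 :: real)"
  using assms vertex_maps_undefined[OF assms(1)]
  by (auto simp: cell_box_def space_PiM unit_interval_def indicator_def PiE_iff fun_eq_iff)
     (metis lessThan_iff)

lemma hom_density_step_kernel:
  assumes k: "k > 0" and E: "\<forall>e\<in>E. Min e < n \<and> Max e < n"
  shows "hom_density n E (step_kernel k M) = hom_sum n E k (\<lambda>_. M) / real k ^ n"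
proof -
  define P where "P = PiM {..<n} (\<lambda>_. unit_interval)"
  define G where "G \<phi> = (\<Prod>e\<in>E. M (\<phi> (Min e)) (\<phi> (Max e)))" for \<phi>
  have integrand: "(\<Prod>e\<in>E. step_kernel k M (x (Min e)) (x (Max e))) =
      (\<Sum>\<phi>\<in>vertex_maps n k. G \<phi> * indicator (cell_box n k \<phi>) x)" if "x \<in> space P" for x
  proof -
    define \<psi> where "\<psi> = restrict (\<lambda>i. cell k (x i)) {..<n}"
    have "\<psi> \<in> vertex_maps n k"
      unfolding \<psi>_def by (rule restrict_in_vertex_maps) (simp add: cell_less[OF k])
    then have "(\<Sum>\<phi>\<in>vertex_maps n k. G \<phi> * indicator (cell_box n k \<phi>) x) = G \<psi>"
      using that unfolding P_def
      by (subst sum.cong[OF refl, where h = "\<lambda>\<phi>. if \<phi> = \<psi> then G \<phi> else 0"])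
         (auto simp: indicator_cell_box \<psi>_def)
    then show ?thesis by (simp add: G_def step_kernel_def \<psi>_def E cong: prod.cong)
  qed
  have "hom_density n E (step_kernel k M) =
      integral\<^sup>L P (\<lambda>x. \<Sum>\<phi>\<in>vertex_maps n k. G \<phi> * indicator (cell_box n k \<phi>) x)"
    unfolding hom_density_def P_def[symmetric] by (rule Bochner_Integration.integral_cong[OF refl integrand])
  also have "\<dots> = (\<Sum>\<phi>\<in>vertex_maps n k. integral\<^sup>L P (\<lambda>x. G \<phi> * indicator (cell_box n k \<phi>) x))"
    using cell_box_in_sets[OF k] emeasure_cell_box[OF k]
    by (intro Bochner_Integration.integral_sum) (auto simp: P_def)
  also have "\<dots> = (\<Sum>\<phi>\<in>vertex_maps n k. G \<phi> * (1 / real k) ^ n)"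
    using cell_box_in_sets[OF k] emeasure_cell_box[OF k] sets.sets_into_space
    by (intro sum.cong refl) (simp add: P_def measure_def Int_absorb2)
  also have "\<dots> = hom_sum n E k (\<lambda>_. M) / real k ^ n"
    by (simp add: hom_sum_def G_def sum_distrib_right[symmetric] power_one_over divide_inverse power_inverse)
  finally show ?thesis .
qed

lemma graph_norm_step_kernel:
  assumes "k > 0" and "\<forall>e\<in>E. Min e < n \<and> Max e < n"
  shows "graph_norm n E (step_kernel k M) = matrix_norm n E k M / (real k ^ n) powr (1 / real (card E))"
proof -
  have "(\<lambda>x y. \<bar>step_kernel k M x y\<bar>) = step_kernel k (\<lambda>a b. \<bar>M a b\<bar>)"
    by (simp add: step_kernel_def fun_eq_iff)
  then show ?thesis
    unfolding graph_norm_def matrix_norm_def by (simp add: hom_density_step_kernel[OF assms] powr_divide)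
qed

locale finite_graph =
  fixes n :: nat and E :: "nat set set"
  assumes simple: "simple_graph n E" and edges_nonempty: "E \<noteq> {}"
begin

lemma edge_endpoints:
  assumes "e \<in> E"
  shows "Min e < n" "Max e < n" "Min e \<noteq> Max e" "{Min e, Max e} = e"
proof -
  have "e \<subseteq> {..<n}" "card e = 2" using simple assms by (auto simp: simple_graph_def)
  then obtain a b where "e = {a, b}" "a \<noteq> b" "a < n" "b < n" by (auto simp: card_2_iff)
  then show "Min e < n" "Max e < n" "Min e \<noteq> Max e" "{Min e, Max e} = e"
    by (auto simp: min_def max_def)
qed

lemma endpoints_less: "\<forall>e\<in>E. Min e < n \<and> Max e < n"
  using edge_endpoints by blast

lemma finite_edges: "finite E"
  using simple finite_subset[of E "Pow {..<n}"] by (auto simp: simple_graph_def)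

lemma card_edges_pos: "card E > 0"
  using finite_edges edges_nonempty by (simp add: card_gt_0_iff)

lemma vertices_nonempty: "n > 0"
  using edges_nonempty edge_endpoints(1) by fastforce

lemma image_edge: "e \<in> E \<Longrightarrow> {\<phi> (Min e), \<phi> (Max e)} = \<phi> ` e"
  using edge_endpoints(4)[of e] by (metis image_insert image_empty)

lemma hom_sum_nonneg:
  "(\<And>e a b. e \<in> E \<Longrightarrow> a < k \<Longrightarrow> b < k \<Longrightarrow> 0 \<le> A e a b) \<Longrightarrow> 0 \<le> hom_sum n E k A"
  unfolding hom_sum_def by (intro sum_nonneg prod_nonneg) (simp add: vertex_maps_less edge_endpoints)

lemma hom_sum_pos:
  "k > 0 \<Longrightarrow> (\<And>e a b. e \<in> E \<Longrightarrow> a < k \<Longrightarrow> b < k \<Longrightarrow> 0 < A e a b) \<Longrightarrow> 0 < hom_sum n E k A"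
  unfolding hom_sum_def
  by (intro sum_pos prod_pos) (simp_all add: vertex_maps_nonempty vertex_maps_less edge_endpoints)

lemma matrix_norm_scale:
  assumes "c \<ge> 0"
  shows "matrix_norm n E k (\<lambda>a b. c * M a b) = c * matrix_norm n E k M"
proof -
  define X where "X = hom_sum n E k (\<lambda>_ a b. \<bar>M a b\<bar>)"
  have "X \<ge> 0" unfolding X_def by (rule hom_sum_nonneg) simp
  have "hom_sum n E k (\<lambda>_ a b. \<bar>c * M a b\<bar>) = c ^ card E * X"
    unfolding hom_sum_def X_def using assms by (simp add: abs_mult prod.distrib sum_distrib_left)
  moreover have "(c ^ card E) powr (1 / real (card E)) = c"
    using assms card_edges_pos
    by (cases "c = 0") (simp_all add: powr_realpow[symmetric] powr_powr)
  ultimately show ?thesis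
    unfolding matrix_norm_def X_def[symmetric] using assms \<open>X \<ge> 0\<close> by (simp add: powr_mult)
qed

lemma hom_sum_remove:
  "e \<in> E \<Longrightarrow> hom_sum n E k A =
    (\<Sum>\<phi>\<in>vertex_maps n k. A e (\<phi> (Min e)) (\<phi> (Max e)) * (\<Prod>f\<in>E - {e}. A f (\<phi> (Min f)) (\<phi> (Max f))))"
  unfolding hom_sum_def by (intro sum.cong refl) (simp add: prod.remove[OF finite_edges])

lemma marked_hom_sum_remove:
  "e \<in> E \<Longrightarrow> marked_hom_sum n E k B \<Phi> e =
    (\<Sum>\<phi>\<in>vertex_maps n k. \<Phi> (\<phi> (Min e)) (\<phi> (Max e)) * (\<Prod>f\<in>E - {e}. B (\<phi> (Min f)) (\<phi> (Max f))))"
  unfolding marked_hom_sum_def by (auto simp: hom_sum_remove intro!: sum.cong prod.cong)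

lemma has_field_derivative_hom_sum_perturb:
  "((\<lambda>\<epsilon>. hom_sum n E k (\<lambda>_ a b. B a b + \<epsilon> * \<Phi> a b)) has_field_derivative
     (\<Sum>e\<in>E. marked_hom_sum n E k B \<Phi> e)) (at 0)"
proof -
  have "((\<lambda>\<epsilon>. hom_sum n E k (\<lambda>_ a b. B a b + \<epsilon> * \<Phi> a b)) has_field_derivative
      (\<Sum>\<phi>\<in>vertex_maps n k. \<Sum>e\<in>E. \<Phi> (\<phi> (Min e)) (\<phi> (Max e)) *
         (\<Prod>f\<in>E - {e}. B (\<phi> (Min f)) (\<phi> (Max f)) + 0 * \<Phi> (\<phi> (Min f)) (\<phi> (Max f))))) (at 0)"
    unfolding hom_sum_def
    by (intro DERIV_sum has_field_derivative_prod) (auto intro!: derivative_eq_intros)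
  then show ?thesis
    by (simp add: marked_hom_sum_remove sum.swap[of _ "vertex_maps n k"] cong: sum.cong)
qed

lemma marked_hom_sum_shift_tendsto:
  assumes "e \<in> E"
  shows "((\<lambda>\<delta>. marked_hom_sum n E k (\<lambda>a b. B a b + \<delta>) \<Phi> e) \<longlongrightarrow> marked_hom_sum n E k B \<Phi> e) (at_right 0)"
proof -
  have "((\<lambda>\<delta>. \<Sum>\<phi>\<in>vertex_maps n k. \<Phi> (\<phi> (Min e)) (\<phi> (Max e)) * (\<Prod>f\<in>E - {e}. B (\<phi> (Min f)) (\<phi> (Max f)) + \<delta>))
     \<longlongrightarrow> (\<Sum>\<phi>\<in>vertex_maps n k. \<Phi> (\<phi> (Min e)) (\<phi> (Max e)) * (\<Prod>f\<in>E - {e}. B (\<phi> (Min f)) (\<phi> (Max f)) + 0))) (at_right 0)"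
    by (intro tendsto_intros)
  then show ?thesis using assms by (simp add: marked_hom_sum_remove)
qed

lemma marked_hom_sum_perturb:
  "e \<in> E \<Longrightarrow> marked_hom_sum n E k B (\<lambda>a b. B a b + \<epsilon> * \<Phi> a b) e =
     hom_sum n E k (\<lambda>_. B) + \<epsilon> * marked_hom_sum n E k B \<Phi> e"
  by (simp add: marked_hom_sum_remove hom_sum_remove[of e _ "\<lambda>_. B"] algebra_simps
      sum.distrib sum_distrib_left)

lemma marked_hom_sum_pair_indicator:
  assumes "e \<in> E"
  shows "marked_hom_sum n E n (pair_indicator S) (pair_indicator {e'}) e =
    real (card {\<phi> \<in> vertex_maps n n. \<phi> ` e = e' \<and> edge_images E e \<phi> \<subseteq> S})"
proof -
  have "(\<Prod>f\<in>E - {e}. pair_indicator S (\<phi> (Min f)) (\<phi> (Max f))) =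
      (\<Prod>f\<in>E - {e}. if \<phi> ` f \<in> S then 1 else 0)" for \<phi>
    by (intro prod.cong refl) (simp add: pair_indicator_def image_edge)
  also have "\<dots> \<phi> = (if edge_images E e \<phi> \<subseteq> S then 1 else 0)" for \<phi>
    using finite_edges by (simp add: prod_if_one_zero edge_images_def image_subset_iff)
  finally have "marked_hom_sum n E n (pair_indicator S) (pair_indicator {e'}) e =
      (\<Sum>\<phi>\<in>vertex_maps n n. if \<phi> ` e = e' \<and> edge_images E e \<phi> \<subseteq> S then 1 else 0)"
    using assms by (simp add: marked_hom_sum_remove pair_indicator_def image_edge) (auto intro!: sum.cong)
  then show ?thesis by (simp add: sum.inter_filter[symmetric])
qed

(* A vertex map permuting the edges is a bijection on the non-isolated vertices; extended by the
   identity it becomes an automorphism. *)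
lemma automorphism_if_permutes_edges:
  assumes "(\<lambda>f. \<phi> ` f) ` E = E"
  obtains \<sigma> where "graph_automorphism n E \<sigma>" "\<And>f. f \<in> E \<Longrightarrow> \<sigma> ` f = \<phi> ` f"
proof -
  define V where "V = \<Union>E"
  have "V \<subseteq> {..<n}" using simple by (auto simp: V_def simple_graph_def)
  then have "finite V" by (rule finite_subset) simp
  have "\<phi> ` V = V" unfolding V_def image_Union using assms by simp
  then have "inj_on \<phi> V" using \<open>finite V\<close> by (simp add: eq_card_imp_inj_on)
  define \<sigma> where "\<sigma> x = (if x \<in> V then \<phi> x else x)" for x
  have \<sigma>_edge: "\<sigma> ` f = \<phi> ` f" if "f \<in> E" for f
    using that by (auto simp: \<sigma>_def V_def)
  have "inj_on \<sigma> {..<n}"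
  proof (rule inj_onI)
    fix x y assume "\<sigma> x = \<sigma> y"
    moreover have "\<phi> z \<in> V" if "z \<in> V" for z using that \<open>\<phi> ` V = V\<close> by blast
    ultimately show "x = y" using \<open>inj_on \<phi> V\<close> by (auto simp: \<sigma>_def inj_on_def split: if_splits)
  qed
  moreover have "\<sigma> ` {..<n} \<subseteq> {..<n}"
    using \<open>\<phi> ` V = V\<close> \<open>V \<subseteq> {..<n}\<close> by (auto simp: \<sigma>_def)
  ultimately have "bij_betw \<sigma> {..<n} {..<n}"
    by (simp add: bij_betw_def endo_inj_surj)
  moreover have "e \<in> E \<longleftrightarrow> \<sigma> ` e \<in> E" if "e \<subseteq> {..<n}" for e
  proof
    assume "e \<in> E"
    then have "\<phi> ` e \<in> (\<lambda>f. \<phi> ` f) ` E" by (rule imageI)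
    then show "\<sigma> ` e \<in> E" using assms \<sigma>_edge[OF \<open>e \<in> E\<close>] by simp
  next
    assume "\<sigma> ` e \<in> E"
    then obtain f where "f \<in> E" "\<sigma> ` f = \<sigma> ` e" using assms \<sigma>_edge by (metis imageE)
    moreover have "f \<subseteq> {..<n}" using simple \<open>f \<in> E\<close> by (simp add: simple_graph_def)
    ultimately have "f = e"
      using inj_on_image_eq_iff[OF \<open>inj_on \<sigma> {..<n}\<close>] that by blast
    with \<open>f \<in> E\<close> show "e \<in> E" by simp
  qed
  ultimately have "graph_automorphism n E \<sigma>"
    by (simp add: graph_automorphism_def)
  then show thesis using \<sigma>_edge by (rule that)
qed

lemma matrix_norm_triangle_if_weakly_norming:
  assumes "weakly_norming n E" and "k > 0" "sym_matrix k M" "sym_matrix k M'"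
  shows "matrix_norm n E k (\<lambda>a b. M a b + M' a b) \<le> matrix_norm n E k M + matrix_norm n E k M'"
proof -
  define c where "c = (real k ^ n) powr (1 / real (card E))"
  have "c > 0" using assms(2) by (simp add: c_def)
  have "(\<lambda>x y. step_kernel k M x y + step_kernel k M' x y) = step_kernel k (\<lambda>a b. M a b + M' a b)"
    by (simp add: step_kernel_def fun_eq_iff)
  moreover have "graph_norm n E (\<lambda>x y. step_kernel k M x y + step_kernel k M' x y)
      \<le> graph_norm n E (step_kernel k M) + graph_norm n E (step_kernel k M')"
    using assms step_kernel_in_kernel_class unfolding weakly_norming_def by blast
  ultimately have "matrix_norm n E k (\<lambda>a b. M a b + M' a b) / c \<le> matrix_norm n E k M / c + matrix_norm n E k M' / c"
    by (simp add: graph_norm_step_kernel[OF assms(2) endpoints_less] c_def)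
  then show ?thesis using \<open>c > 0\<close> by (simp add: add_divide_distrib[symmetric] divide_le_cancel)
qed

lemma hom_sum_edge_blowup_le:
  assumes k: "k > 0" and "e \<in> E" and nonneg: "\<forall>a<k. \<forall>b<k. 0 \<le> M a b"
  shows "hom_sum n E (n * k) (\<lambda>_. edge_blowup k M e) \<le> real n ^ n * hom_sum n E k (\<lambda>_. M)"
proof -
  have "hom_sum n E (n * k) (\<lambda>_. edge_blowup k M e) \<le>
      (\<Sum>(\<psi>, \<alpha>)\<in>vertex_maps n n \<times> vertex_maps n k. \<Prod>f\<in>E. M (\<alpha> (Min f)) (\<alpha> (Max f)))"
    unfolding hom_sum_digits[OF k endpoints_less]
    using nonneg
    by (intro sum_mono) (auto intro!: prod_mono simp: edge_blowup_digits vertex_maps_less edge_endpoints)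
  also have "\<dots> = real n ^ n * hom_sum n E k (\<lambda>_. M)"
    by (simp add: hom_sum_def sum.cartesian_product[symmetric] card_vertex_maps)
  finally show ?thesis .
qed

(* Keep only the maps sending every vertex into its own block; there edge f sees exactly x f A f. *)
lemma prod_mult_hom_sum_le_edge_blowup:
  assumes k: "k > 0" and x: "\<And>e. e \<in> E \<Longrightarrow> 0 \<le> x e"
    and nonneg: "\<And>e a b. e \<in> E \<Longrightarrow> a < k \<Longrightarrow> b < k \<Longrightarrow> 0 \<le> A e a b"
  shows "(\<Prod>e\<in>E. x e) * hom_sum n E k A \<le> hom_sum n E (n * k) (\<lambda>_ p q. \<Sum>e\<in>E. x e * edge_blowup k (A e) e p q)"
proof -
  let ?V = "\<lambda>p q. \<Sum>e\<in>E. x e * edge_blowup k (A e) e p q"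
  let ?T = "\<lambda>(\<psi>, \<alpha>). \<Prod>f\<in>E. ?V (\<psi> (Min f) * k + \<alpha> (Min f)) (\<psi> (Max f) * k + \<alpha> (Max f))"
  define id_n where "id_n = restrict (\<lambda>i. i) {..<n}"
  have id_n: "id_n \<in> vertex_maps n n" unfolding id_n_def by (rule restrict_in_vertex_maps)
  have "?V p q \<ge> 0" for p q
    using k x nonneg by (auto simp: edge_blowup_def intro!: sum_nonneg)
  then have "sum ?T ({id_n} \<times> vertex_maps n k) \<le> sum ?T (vertex_maps n n \<times> vertex_maps n k)"
    using id_n by (intro sum_mono2) (auto intro!: prod_nonneg)
  moreover have "?T (id_n, \<alpha>) = (\<Prod>f\<in>E. x f * A f (\<alpha> (Min f)) (\<alpha> (Max f)))"
    if "\<alpha> \<in> vertex_maps n k" for \<alpha>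
  proof -
    have "?V (id_n (Min f) * k + \<alpha> (Min f)) (id_n (Max f) * k + \<alpha> (Max f)) = x f * A f (\<alpha> (Min f)) (\<alpha> (Max f))"
      if "f \<in> E" for f
    proof -
      have "?V (id_n (Min f) * k + \<alpha> (Min f)) (id_n (Max f) * k + \<alpha> (Max f))
          = (\<Sum>e\<in>E. if e = f then x e * A e (\<alpha> (Min f)) (\<alpha> (Max f)) else 0)"
        using \<open>f \<in> E\<close> \<open>\<alpha> \<in> vertex_maps n k\<close>
        by (intro sum.cong refl) (auto simp: id_n_def edge_blowup_digits vertex_maps_less edge_endpoints)
      then show ?thesis using \<open>f \<in> E\<close> finite_edges by simp
    qed
    then show ?thesis by (simp cong: prod.cong)
  qed
  then have "sum ?T ({id_n} \<times> vertex_maps n k) = (\<Prod>e\<in>E. x e) * hom_sum n E k A"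
    by (simp add: sum.cartesian_product[symmetric] hom_sum_def sum_distrib_left prod.distrib)
  ultimately show ?thesis
    by (simp add: hom_sum_digits[OF k endpoints_less])
qed

end

section \<open>Hoelder's inequality from the triangle inequality\<close>

locale matrix_norming_graph = finite_graph +
  assumes matrix_norm_triangle: "\<And>k M M'. k > 0 \<Longrightarrow> sym_matrix k M \<Longrightarrow> sym_matrix k M' \<Longrightarrow>
      matrix_norm n E k (\<lambda>a b. M a b + M' a b) \<le> matrix_norm n E k M + matrix_norm n E k M'"
begin

lemma matrix_norm_sum_le:
  assumes "finite S" "k > 0" "\<And>s. s \<in> S \<Longrightarrow> sym_matrix k (M s)"
  shows "matrix_norm n E k (\<lambda>a b. \<Sum>s\<in>S. M s a b) \<le> (\<Sum>s\<in>S. matrix_norm n E k (M s))"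
  using assms
proof (induction S rule: finite_induct)
  case empty
  then show ?case using card_edges_pos by (simp add: matrix_norm_def hom_sum_def)
next
  case (insert s S)
  have "sym_matrix k (\<lambda>a b. \<Sum>s\<in>S. M s a b)"
    using insert.prems(2) unfolding sym_matrix_def by (auto intro!: sum.cong)
  then have "matrix_norm n E k (\<lambda>a b. \<Sum>s\<in>insert s S. M s a b)
      \<le> matrix_norm n E k (M s) + matrix_norm n E k (\<lambda>a b. \<Sum>s\<in>S. M s a b)"
    using matrix_norm_triangle[of k "M s"] insert by simp
  then show ?case using insert by simp
qed

lemma hom_sum_edge_blowups_le:
  assumes k: "k > 0" and sym: "\<And>e. e \<in> E \<Longrightarrow> sym_matrix k (A e)"
    and nonneg: "\<And>e a b. e \<in> E \<Longrightarrow> a < k \<Longrightarrow> b < k \<Longrightarrow> 0 \<le> A e a b"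
    and x: "\<And>e. e \<in> E \<Longrightarrow> 0 \<le> x e"
  shows "hom_sum n E (n * k) (\<lambda>_ p q. \<Sum>e\<in>E. x e * edge_blowup k (A e) e p q) \<le>
    (\<Sum>e\<in>E. x e * (real n ^ n * hom_sum n E k (\<lambda>_. A e)) powr (1 / real (card E))) ^ card E"
proof -
  define V where "V = (\<lambda>p q. \<Sum>e\<in>E. x e * edge_blowup k (A e) e p q)"
  have blowup_nonneg: "0 \<le> edge_blowup k (A e) e p q" if "e \<in> E" for e p q
    using nonneg[OF that] k by (simp add: edge_blowup_def)
  have V_entry_nonneg: "0 \<le> V p q" for p q
    unfolding V_def using x blowup_nonneg by (intro sum_nonneg mult_nonneg_nonneg)
  have "matrix_norm n E (n * k) V \<le> (\<Sum>e\<in>E. matrix_norm n E (n * k) (\<lambda>p q. x e * edge_blowup k (A e) e p q))"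
    unfolding V_def using sym k vertices_nonempty
    by (intro matrix_norm_sum_le finite_edges) (auto intro!: edge_blowup_sym_matrix)
  also have "\<dots> = (\<Sum>e\<in>E. x e * matrix_norm n E (n * k) (edge_blowup k (A e) e))"
    using x by (intro sum.cong refl matrix_norm_scale)
  also have "\<dots> \<le> (\<Sum>e\<in>E. x e * (real n ^ n * hom_sum n E k (\<lambda>_. A e)) powr (1 / real (card E)))"
    unfolding matrix_norm_def using x blowup_nonneg nonneg k
    by (intro sum_mono mult_left_mono powr_mono2) (auto intro!: hom_sum_edge_blowup_le hom_sum_nonneg)
  finally have "hom_sum n E (n * k) (\<lambda>_. V) powr (1 / real (card E)) \<le>
      (\<Sum>e\<in>E. x e * (real n ^ n * hom_sum n E k (\<lambda>_. A e)) powr (1 / real (card E)))"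
    by (simp add: matrix_norm_def abs_of_nonneg[OF V_entry_nonneg])
  then show ?thesis
    unfolding V_def[symmetric]
    using V_entry_nonneg card_edges_pos hom_sum_nonneg[of _ "\<lambda>_. V"]
    by (metis (no_types, lifting) power_mono powr_ge_zero powr_one_over_power)
qed

(* Split the blown-up kernel into the edge pieces x e A e with x e = hom_sum(A e)^(-1/|E|);
   restricted to the identity block pattern it dominates hom_sum A, while the triangle inequality
   bounds it by a constant. *)
lemma hom_sum_le_const_prod:
  assumes k: "k > 0" and A: "\<And>e. e \<in> E \<Longrightarrow> sym_matrix k (A e) \<and> pos_matrix k (A e)"
  shows "hom_sum n E k A \<le> real n ^ n * real (card E) ^ card E *
           (\<Prod>e\<in>E. hom_sum n E k (\<lambda>_. A e) powr (1 / real (card E)))"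
proof -
  define m where "m = real (card E)"
  define y where "y e = hom_sum n E k (\<lambda>_. A e)" for e
  have y: "y e > 0" if "e \<in> E" for e
    unfolding y_def using A[OF that] k by (intro hom_sum_pos) (auto simp: pos_matrix_def)
  define x where "x e = y e powr (- 1 / m)" for e
  have x_y: "x e * y e powr (1 / m) = 1" if "e \<in> E" for e
    using y[OF that] by (simp add: x_def powr_add[symmetric])
  have A_nonneg: "0 \<le> A e a b" if "e \<in> E" "a < k" "b < k" for e a b
    using A[OF that(1)] that by (auto simp: pos_matrix_def less_imp_le)
  define V where "V = hom_sum n E (n * k) (\<lambda>_ p q. \<Sum>e\<in>E. x e * edge_blowup k (A e) e p q)"
  have "V \<le> (\<Sum>e\<in>E. x e * (real n ^ n * y e) powr (1 / m)) ^ card E"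
    unfolding V_def y_def m_def using A A_nonneg by (intro hom_sum_edge_blowups_le[OF k]) (auto simp: x_def)
  also have "(\<Sum>e\<in>E. x e * (real n ^ n * y e) powr (1 / m)) = (\<Sum>e\<in>E. (real n ^ n) powr (1 / m))"
  proof (intro sum.cong refl)
    fix e assume "e \<in> E"
    then show "x e * (real n ^ n * y e) powr (1 / m) = (real n ^ n) powr (1 / m)"
      using x_y[OF \<open>e \<in> E\<close>] less_imp_le[OF y[OF \<open>e \<in> E\<close>]] by (simp add: powr_mult mult.left_commute)
  qed
  also have "\<dots> = m * (real n ^ n) powr (1 / m)"
    by (simp add: m_def)
  also have "(m * (real n ^ n) powr (1 / m)) ^ card E = m ^ card E * real n ^ n"
    using card_edges_pos by (simp add: power_mult_distrib powr_one_over_power m_def)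
  finally have upper: "V \<le> m ^ card E * real n ^ n" .
  have lower: "(\<Prod>e\<in>E. x e) * hom_sum n E k A \<le> V"
    unfolding V_def using y A_nonneg
    by (intro prod_mult_hom_sum_le_edge_blowup[OF k]) (auto simp: x_def)
  have "(\<Prod>e\<in>E. x e) * (\<Prod>e\<in>E. y e powr (1 / m)) = 1"
    using x_y by (simp add: prod.distrib[symmetric])
  then have "hom_sum n E k A = ((\<Prod>e\<in>E. x e) * hom_sum n E k A) * (\<Prod>e\<in>E. y e powr (1 / m))"
    by (simp add: algebra_simps)
  also have "\<dots> \<le> (m ^ card E * real n ^ n) * (\<Prod>e\<in>E. y e powr (1 / m))"
    using lower upper by (intro mult_right_mono prod_nonneg) auto
  finally have "hom_sum n E k A \<le> (m ^ card E * real n ^ n) * (\<Prod>e\<in>E. y e powr (1 / m))" .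
  then show ?thesis by (simp add: m_def y_def algebra_simps)
qed

lemma hom_sum_power_le_const_prod:
  "k > 0 \<Longrightarrow> (\<And>e. e \<in> E \<Longrightarrow> sym_matrix k (A e) \<and> pos_matrix k (A e)) \<Longrightarrow>
   hom_sum n E k A ^ (2 ^ r) \<le> real n ^ n * real (card E) ^ card E *
     (\<Prod>e\<in>E. hom_sum n E k (\<lambda>_. A e) powr (1 / real (card E))) ^ (2 ^ r)"
proof (induction r arbitrary: k A)
  case 0
  then show ?case using hom_sum_le_const_prod by simp
next
  case (Suc r)
  define A' where "A' e = kron k (A e) (A e)" for e
  have "hom_sum n E (k * k) A' ^ (2 ^ r) \<le> real n ^ n * real (card E) ^ card E *
      (\<Prod>e\<in>E. hom_sum n E (k * k) (\<lambda>_. A' e) powr (1 / real (card E))) ^ (2 ^ r)"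
    using Suc by (intro Suc.IH) (simp_all add: A'_def kron_sym_matrix kron_pos_matrix)
  moreover have "hom_sum n E (k * k) A' = hom_sum n E k A ^ 2"
    unfolding A'_def using Suc.prems(1) by (simp add: hom_sum_kron endpoints_less power2_eq_square)
  moreover have "hom_sum n E (k * k) (\<lambda>_. A' e) powr (1 / real (card E)) =
      (hom_sum n E k (\<lambda>_. A e) powr (1 / real (card E))) ^ 2" if "e \<in> E" for e
  proof -
    have "0 \<le> hom_sum n E k (\<lambda>_. A e)"
      using Suc.prems(2)[OF that] by (intro hom_sum_nonneg) (auto simp: pos_matrix_def less_imp_le)
    then show ?thesis unfolding A'_def using Suc.prems(1)
      by (simp add: hom_sum_kron[where A = "\<lambda>_. A e"] endpoints_less power2_eq_square powr_mult)
  qed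
  ultimately show ?case
    by (simp add: prod_power_distrib power_mult[symmetric] mult.commute cong: prod.cong)
qed

(* The tensor power trick: the constant of hom_sum_le_const_prod does not grow under A \<mapsto> A \<otimes> A
   while both sides get squared. *)
lemma hom_sum_le_prod:
  assumes k: "k > 0" and A: "\<And>e. e \<in> E \<Longrightarrow> sym_matrix k (A e) \<and> pos_matrix k (A e)"
  shows "hom_sum n E k A \<le> (\<Prod>e\<in>E. hom_sum n E k (\<lambda>_. A e) powr (1 / real (card E)))"
proof (rule ccontr)
  define P where "P = hom_sum n E k A"
  define Q where "Q = (\<Prod>e\<in>E. hom_sum n E k (\<lambda>_. A e) powr (1 / real (card E)))"
  define C where "C = real n ^ n * real (card E) ^ card E"
  assume "\<not> P \<le> Q"
  have "Q > 0" unfolding Q_def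
  proof (rule prod_pos)
    fix e assume "e \<in> E"
    then have "hom_sum n E k (\<lambda>_. A e) > 0"
      using A k by (intro hom_sum_pos) (auto simp: pos_matrix_def)
    then show "hom_sum n E k (\<lambda>_. A e) powr (1 / real (card E)) > 0" by simp
  qed
  define t where "t = P / Q"
  have t: "t > 1" using \<open>\<not> P \<le> Q\<close> \<open>Q > 0\<close> by (simp add: t_def)
  have bound: "t ^ (2 ^ r) \<le> C" for r
  proof -
    have "t ^ (2 ^ r) * Q ^ (2 ^ r) \<le> C * Q ^ (2 ^ r)"
      using hom_sum_power_le_const_prod[OF k A, where r = r] \<open>Q > 0\<close>
      by (simp add: P_def Q_def C_def t_def power_divide)
    then show ?thesis using \<open>Q > 0\<close> by simp
  qed
  obtain r :: nat where "C / (t - 1) < real r" using reals_Archimedean2 by blast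
  then have "C < real r * (t - 1)" using t by (simp add: divide_less_eq)
  also have "\<dots> \<le> real (2 ^ r) * (t - 1)"
    using t by (intro mult_right_mono) (simp_all add: less_imp_le)
  also have "\<dots> < 1 + real (2 ^ r) * (t - 1)" by simp
  also have "\<dots> \<le> (1 + (t - 1)) ^ (2 ^ r)"
    using t by (intro Bernoulli_inequality) simp
  also have "\<dots> \<le> C" using bound by simp
  finally show False by simp
qed

lemma marked_hom_sum_power_le:
  assumes k: "k > 0" and e: "e \<in> E"
    and "sym_matrix k B" "pos_matrix k B" "sym_matrix k \<Phi>" "pos_matrix k \<Phi>"
  shows "marked_hom_sum n E k B \<Phi> e ^ card E \<le> hom_sum n E k (\<lambda>_. \<Phi>) * hom_sum n E k (\<lambda>_. B) ^ (card E - 1)"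
proof -
  define N where "N = card E"
  have N: "N > 0" using card_edges_pos by (simp add: N_def)
  have nonneg: "0 \<le> hom_sum n E k (\<lambda>_. B)" "0 \<le> hom_sum n E k (\<lambda>_. \<Phi>)"
    using assms by (auto intro!: hom_sum_nonneg simp: pos_matrix_def less_imp_le)
  have "(\<Prod>f\<in>E. hom_sum n E k (\<lambda>_. if f = e then \<Phi> else B) powr (1 / real N)) =
      hom_sum n E k (\<lambda>_. \<Phi>) powr (1 / real N) * (hom_sum n E k (\<lambda>_. B) powr (1 / real N)) ^ (N - 1)"
  proof -
    have "(\<Prod>f\<in>E - {e}. hom_sum n E k (\<lambda>_. if f = e then \<Phi> else B) powr (1 / real N)) =
        (\<Prod>f\<in>E - {e}. hom_sum n E k (\<lambda>_. B) powr (1 / real N))"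
      by (rule prod.cong) auto
    then show ?thesis using e finite_edges by (simp add: prod.remove N_def card_Diff_singleton)
  qed
  moreover have "marked_hom_sum n E k B \<Phi> e \<le> (\<Prod>f\<in>E. hom_sum n E k (\<lambda>_. if f = e then \<Phi> else B) powr (1 / real N))"
    unfolding marked_hom_sum_def N_def using assms by (intro hom_sum_le_prod) auto
  moreover have "0 \<le> marked_hom_sum n E k B \<Phi> e"
    unfolding marked_hom_sum_def using assms by (intro hom_sum_nonneg) (auto simp: pos_matrix_def less_imp_le)
  ultimately have "marked_hom_sum n E k B \<Phi> e ^ N \<le>
      (hom_sum n E k (\<lambda>_. \<Phi>) powr (1 / real N) * (hom_sum n E k (\<lambda>_. B) powr (1 / real N)) ^ (N - 1)) ^ N"
    by (intro power_mono) auto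
  also have "\<dots> = hom_sum n E k (\<lambda>_. \<Phi>) * hom_sum n E k (\<lambda>_. B) ^ (N - 1)"
    using nonneg N
    by (simp add: power_mult_distrib powr_one_over_power flip: power_mult, simp add: mult.commute power_mult powr_one_over_power)
  finally show ?thesis by (simp add: N_def)
qed

end

section \<open>Equality in Hoelder's inequality\<close>

context matrix_norming_graph
begin

(* At B the generalised Hoelder inequality is an equality, so perturbing the weight of the single
   edge e gives a function of \<epsilon> with a local minimum at 0, whose derivative must vanish. *)
lemma card_edges_mult_marked_hom_sum:
  assumes k: "k > 0" and B: "sym_matrix k B" "pos_matrix k B" and \<Phi>: "sym_matrix k \<Phi>" and e: "e \<in> E"
  shows "real (card E) * marked_hom_sum n E k B \<Phi> e = (\<Sum>f\<in>E. marked_hom_sum n E k B \<Phi> f)"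
proof -
  define N where "N = card E"
  define c where "c = hom_sum n E k (\<lambda>_. B)"
  define L where "L = marked_hom_sum n E k B \<Phi> e"
  define S where "S = (\<Sum>f\<in>E. marked_hom_sum n E k B \<Phi> f)"
  define p where "p \<epsilon> = hom_sum n E k (\<lambda>_ a b. B a b + \<epsilon> * \<Phi> a b) * c ^ (N - 1) - (c + \<epsilon> * L) ^ N" for \<epsilon>
  have "c > 0" unfolding c_def using B k by (intro hom_sum_pos) (auto simp: pos_matrix_def)
  obtain \<delta> :: real where "\<delta> > 0" and \<delta>: "\<And>\<epsilon>. \<bar>\<epsilon>\<bar> < \<delta> \<Longrightarrow> pos_matrix k (\<lambda>a b. B a b + \<epsilon> * \<Phi> a b)"
    using pos_matrix_perturb[OF k B(2)] by blast
  have "p 0 \<le> p \<epsilon>" if "\<bar>0 - \<epsilon>\<bar> < \<delta>" for \<epsilon>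
  proof -
    have "sym_matrix k (\<lambda>a b. B a b + \<epsilon> * \<Phi> a b)" using B \<Phi> by (simp add: sym_matrix_def)
    from marked_hom_sum_power_le[OF k e B this \<delta>] that
    have "(c + \<epsilon> * L) ^ N \<le> hom_sum n E k (\<lambda>_ a b. B a b + \<epsilon> * \<Phi> a b) * c ^ (N - 1)"
      by (simp add: marked_hom_sum_perturb[OF e] c_def L_def N_def)
    moreover have "p 0 = 0"
      using card_edges_pos by (simp add: p_def c_def N_def flip: power_Suc)
    ultimately show ?thesis by (simp add: p_def)
  qed
  moreover have "(p has_field_derivative (S * c ^ (N - 1) - real N * (c + 0 * L) ^ (N - 1) * L)) (at 0)"
    unfolding p_def S_def
    by (rule derivative_eq_intros has_field_derivative_hom_sum_perturb refl | simp)+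
  ultimately have "S * c ^ (N - 1) - real N * (c + 0 * L) ^ (N - 1) * L = 0"
    using \<open>\<delta> > 0\<close> by (intro DERIV_local_min[of p _ 0 \<delta>]) auto
  then have "(S - real N * L) * c ^ (N - 1) = 0" by (simp add: algebra_simps)
  then show ?thesis using \<open>c > 0\<close> by (simp add: S_def N_def L_def)
qed

lemma marked_hom_sum_edge_independent:
  assumes k: "k > 0" and B: "sym_matrix k B" "\<forall>a<k. \<forall>b<k. 0 \<le> B a b" and \<Phi>: "sym_matrix k \<Phi>"
    and e: "e \<in> E" "e' \<in> E"
  shows "marked_hom_sum n E k B \<Phi> e = marked_hom_sum n E k B \<Phi> e'"
proof (rule tendsto_unique[OF trivial_limit_at_right_real marked_hom_sum_shift_tendsto[OF e(1)]])
  have "marked_hom_sum n E k (\<lambda>a b. B a b + \<delta>) \<Phi> e' = marked_hom_sum n E k (\<lambda>a b. B a b + \<delta>) \<Phi> e"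
    if "\<delta> > 0" for \<delta> :: real
  proof -
    have "sym_matrix k (\<lambda>a b. B a b + \<delta>)" "pos_matrix k (\<lambda>a b. B a b + \<delta>)"
      using B that by (auto simp: sym_matrix_def pos_matrix_def add_nonneg_pos)
    then show ?thesis
      using card_edges_mult_marked_hom_sum[OF k _ _ \<Phi>] e card_edges_pos by (metis of_nat_0_less_iff mult_cancel_left less_irrefl)
  qed
  then have "\<forall>\<^sub>F \<delta> in at_right (0::real).
      marked_hom_sum n E k (\<lambda>a b. B a b + \<delta>) \<Phi> e' = marked_hom_sum n E k (\<lambda>a b. B a b + \<delta>) \<Phi> e"
    by (auto intro: eventually_mono[OF eventually_at_right_less])
  then show "((\<lambda>\<delta>. marked_hom_sum n E k (\<lambda>a b. B a b + \<delta>) \<Phi> e) \<longlongrightarrow> marked_hom_sum n E k B \<Phi> e') (at_right 0)"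
    by (rule Lim_transform_eventually[OF marked_hom_sum_shift_tendsto[OF e(2)]])
qed

lemma card_maps_into_edge_independent:
  assumes "e1 \<in> E" "e2 \<in> E"
  shows "card {\<phi> \<in> vertex_maps n n. \<phi> ` e1 = d \<and> edge_images E e1 \<phi> \<subseteq> S} =
         card {\<phi> \<in> vertex_maps n n. \<phi> ` e2 = d \<and> edge_images E e2 \<phi> \<subseteq> S}"
  using marked_hom_sum_edge_independent[OF vertices_nonempty sym_matrix_pair_indicator _
      sym_matrix_pair_indicator assms, of S "{d}"]
  by (simp add: marked_hom_sum_pair_indicator assms pair_indicator_def)

(* Inclusion-exclusion over the subsets of S. *)
lemma card_maps_onto_edge_independent:
  assumes "e1 \<in> E" "e2 \<in> E" "finite S"
  shows "card {\<phi> \<in> vertex_maps n n. \<phi> ` e1 = d \<and> edge_images E e1 \<phi> = S} =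
         card {\<phi> \<in> vertex_maps n n. \<phi> ` e2 = d \<and> edge_images E e2 \<phi> = S}"
  using assms(3)
proof (induction S rule: finite_psubset_induct)
  case (psubset S)
  define onto where "onto e T = {\<phi> \<in> vertex_maps n n. \<phi> ` e = d \<and> edge_images E e \<phi> = T}" for e T
  have split: "card {\<phi> \<in> vertex_maps n n. \<phi> ` e = d \<and> edge_images E e \<phi> \<subseteq> S} =
      card (onto e S) + (\<Sum>T\<in>Pow S - {S}. card (onto e T))" for e
  proof -
    have "{\<phi> \<in> vertex_maps n n. \<phi> ` e = d \<and> edge_images E e \<phi> \<subseteq> S} = (\<Union>T\<in>Pow S. onto e T)"
      by (auto simp: onto_def)
    also have "card \<dots> = (\<Sum>T\<in>Pow S. card (onto e T))"
      using psubset.hyps by (intro card_UN_disjoint) (auto simp: onto_def)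
    finally show ?thesis
      using psubset.hyps by (simp add: sum.remove[of "Pow S" S])
  qed
  have "(\<Sum>T\<in>Pow S - {S}. card (onto e1 T)) = (\<Sum>T\<in>Pow S - {S}. card (onto e2 T))"
    unfolding onto_def by (intro sum.cong refl psubset.IH) auto
  then have "card (onto e1 S) = card (onto e2 S)"
    using split[of e1] split[of e2] card_maps_into_edge_independent[OF assms(1,2), of d S] by linarith
  then show ?case by (simp only: onto_def)
qed

lemma automorphism_mapping_edge:
  assumes "e \<in> E" "e' \<in> E"
  obtains \<sigma> where "graph_automorphism n E \<sigma>" "\<sigma> ` e = e'"
proof -
  define id_n where "id_n = restrict id {..<n}"
  have "id_n ` f = f" if "f \<in> E" for f
    using that simple by (force simp: id_n_def simple_graph_def)
  then have "id_n \<in> {\<phi> \<in> vertex_maps n n. \<phi> ` e' = e' \<and> edge_images E e' \<phi> = E - {e'}}"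
    using assms(2) by (auto simp: id_n_def edge_images_def intro: restrict_in_vertex_maps)
  then have "card {\<phi> \<in> vertex_maps n n. \<phi> ` e' = e' \<and> edge_images E e' \<phi> = E - {e'}} \<noteq> 0"
    by (auto simp: card_eq_0_iff)
  then have "card {\<phi> \<in> vertex_maps n n. \<phi> ` e = e' \<and> edge_images E e \<phi> = E - {e'}} \<noteq> 0"
    using card_maps_onto_edge_independent[OF assms] finite_edges by simp
  then have "{\<phi> \<in> vertex_maps n n. \<phi> ` e = e' \<and> edge_images E e \<phi> = E - {e'}} \<noteq> {}"
    by (metis card.empty)
  then obtain \<phi> where "\<phi> ` e = e'" "edge_images E e \<phi> = E - {e'}"
    by blast
  have "(\<lambda>f. \<phi> ` f) ` E = insert (\<phi> ` e) (edge_images E e \<phi>)"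
    using assms(1) by (auto simp: edge_images_def)
  also have "\<dots> = E"
    using assms(2) \<open>\<phi> ` e = e'\<close> \<open>edge_images E e \<phi> = E - {e'}\<close> by auto
  finally obtain \<sigma> where "graph_automorphism n E \<sigma>" "\<And>f. f \<in> E \<Longrightarrow> \<sigma> ` f = \<phi> ` f"
    using automorphism_if_permutes_edges by blast
  then show thesis
    using that assms(1) \<open>\<phi> ` e = e'\<close> by simp
qed

lemma edge_transitive: "edge_transitive n E"
  unfolding edge_transitive_def using automorphism_mapping_edge by metis

end

theorem theorem1:
  fixes n :: nat and E :: "nat set set"
  assumes "simple_graph n E"
    and "E \<noteq> {}"
    and "weakly_norming n E"
  shows "edge_transitive n E"
proof -
  interpret finite_graph n E
    using assms(1,2) by unfold_locales
  interpret matrix_norming_graph n E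
    using matrix_norm_triangle_if_weakly_norming[OF assms(3)] by unfold_locales
  show ?thesis by (rule edge_transitive)
qed

end
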